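(* \begin{align*} &\int_{0}^{\frac{\pi}{2}}\frac{\phi(2\cos \phi-1)}{5-4\cos \phi}\,\mathrm{d}\phi=-\frac{1}{12}\pi^{2}+\frac{1}{2}\log^{2}2+\frac{\pi}{2}\arctan{\frac{1}{2}}+\frac{1}{4}\mathrm{Li}_{2}\Big(-\frac{1}{4}\Big)\,,\\ &\int_{0}^{\frac{\pi}{2}}\frac{2\phi\sin \phi}{5-4\cos \phi}\,\mathrm{d}\phi=\frac{\pi}{4}\log\frac{5}{4}+\mathrm{Ti}_{2}\Big(\frac{1}{2}\Big)\,. \end{align*}
   Context: $\mathrm{Li}_2(x)=\sum_{n\ge1}x^n/n^2$ for $|x|\le1$ is the dilogarithm, and $\mathrm{Ti}_{2}(x)=\int_{0}^{x}\frac{\arctan y}{y}\,\mathrm{d}y$ is the inverse tangent integral. *)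

theory Defs
  imports "HOL-Analysis.Analysis"
begin

text \<open>Dilogarithm, defined by its power series (convergent for abs x \<le> 1).\<close>
definition Li2 :: "real \<Rightarrow> real" where
  "Li2 x = (\<Sum>n. x ^ Suc n / (real (Suc n))^2)"

definition Ti2 :: "real \<Rightarrow> real" where
  "Ti2 x = integral {0..x} (\<lambda>y. arctan y / y)"

end

theory Submission
  imports Defs "HOL-Real_Asymp.Real_Asymp"
begin

text \<open>
  For \<open>\<bar>r\<bar> < 1\<close> the geometric series \<open>\<Sum> (r e\<^sup>i\<^sup>\<phi>)\<^sup>n\<close> over \<open>n \<ge> 1\<close> has real and imaginary parts
  \<open>(r cos \<phi> - r\<^sup>2) / (1 - 2 r cos \<phi> + r\<^sup>2)\<close> and \<open>r sin \<phi> / (1 - 2 r cos \<phi> + r\<^sup>2)\<close>; for \<open>r = 1/2\<close>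
  these are \<open>(2 cos \<phi> - 1) / (5 - 4 cos \<phi>)\<close> and \<open>2 sin \<phi> / (5 - 4 cos \<phi>)\<close>. Multiplying by \<open>\<phi>\<close> and
  integrating termwise over \<open>[0, \<pi>/2]\<close> gives series whose terms only involve
  \<open>sin (n\<pi>/2)\<close> and \<open>cos (n\<pi>/2)\<close>, i.e. \<open>0\<close> or \<open>\<plusminus>1\<close>. Splitting into odd and even \<open>n\<close>, they become
  the power series of \<open>arctan x\<close>, \<open>ln (1 + x\<^sup>2)\<close>, \<open>Li\<^sub>2 (-x\<^sup>2)\<close> and \<open>Ti\<^sub>2 x\<close> at \<open>x = 1/2\<close>, together
  with \<open>Li\<^sub>2 (1/2)\<close>, which Euler's reflection formula evaluates.
\<close>

section \<open>Termwise integration of a Poisson-type series\<close>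

lemma geometric_cos_sin_sums:
  fixes r t :: real
  assumes "\<bar>r\<bar> < 1"
  shows "(\<lambda>n. r ^ Suc n * cos (real (Suc n) * t)) sums ((r * cos t - r\<^sup>2) / (1 - 2 * r * cos t + r\<^sup>2))"
    and "(\<lambda>n. r ^ Suc n * sin (real (Suc n) * t)) sums (r * sin t / (1 - 2 * r * cos t + r\<^sup>2))"
proof -
  define z where "z = complex_of_real r * cis t"
  have "norm z < 1"
    using assms by (simp add: z_def norm_mult)
  then have "(\<lambda>n. z * z ^ n) sums (z / (1 - z))"
    using sums_mult[OF geometric_sums] by fastforce
  moreover have "z * z ^ n = complex_of_real (r ^ Suc n) * cis (real (Suc n) * t)" for n
  proof -
    have "z * z ^ n = z ^ Suc n" by simp
    then show ?thesis by (simp only: z_def power_mult_distrib Complex.DeMoivre of_real_power)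
  qed
  ultimately have sums: "(\<lambda>n. complex_of_real (r ^ Suc n) * cis (real (Suc n) * t)) sums (z / (1 - z))"
    by simp
  have denom: "(Re (1 - z))\<^sup>2 + (Im (1 - z))\<^sup>2 = 1 - 2 * r * cos t + r\<^sup>2"
    by (simp add: z_def power2_diff power_mult_distrib sin_squared_eq algebra_simps)
  show "(\<lambda>n. r ^ Suc n * cos (real (Suc n) * t)) sums ((r * cos t - r\<^sup>2) / (1 - 2 * r * cos t + r\<^sup>2))"
  proof -
    have "Re z * Re (1 - z) + Im z * Im (1 - z) = r * cos t - r\<^sup>2"
      by (simp add: z_def) (use sin_cos_squared_add[of t] in algebra)
    then have "Re (z / (1 - z)) = (r * cos t - r\<^sup>2) / (1 - 2 * r * cos t + r\<^sup>2)"
      unfolding Re_divide denom by simp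
    then show ?thesis using sums_complex_iff[THEN iffD1, OF sums] by simp
  qed
  show "(\<lambda>n. r ^ Suc n * sin (real (Suc n) * t)) sums (r * sin t / (1 - 2 * r * cos t + r\<^sup>2))"
  proof -
    have "Im (z / (1 - z)) = r * sin t / (1 - 2 * r * cos t + r\<^sup>2)"
      unfolding Im_divide denom by (simp add: z_def algebra_simps)
    then show ?thesis using sums_complex_iff[THEN iffD1, OF sums] by simp
  qed
qed

lemma sums_integral_termwise:
  fixes f :: "nat \<Rightarrow> real \<Rightarrow> 'a::banach"
  assumes sums: "\<And>x. x \<in> {a..b} \<Longrightarrow> (\<lambda>n. f n x) sums g x"
    and cont: "\<And>n. continuous_on {a..b} (f n)"
    and bound: "\<And>n x. x \<in> {a..b} \<Longrightarrow> norm (f n x) \<le> M n"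
    and "summable M"
  shows "(\<lambda>n. integral {a..b} (f n)) sums integral {a..b} g"
proof -
  have "uniform_limit {a..b} (\<lambda>n x. \<Sum>i<n. f i x) (\<lambda>x. \<Sum>i. f i x) sequentially"
    using bound \<open>summable M\<close> by (rule Weierstrass_m_test)
  moreover have "\<And>n. continuous_on {a..b} (\<lambda>x. \<Sum>i<n. f i x)"
    by (intro continuous_intros cont)
  ultimately obtain I J where I: "\<And>n. ((\<lambda>x. \<Sum>i<n. f i x) has_integral I n) {a..b}"
    and J: "((\<lambda>x. \<Sum>i. f i x) has_integral J) {a..b}" and "I \<longlonglongrightarrow> J"
    by (metis uniform_limit_integral trivial_limit_sequentially)
  have "I = (\<lambda>n. \<Sum>i<n. integral {a..b} (f i))"
  proof
    fix n
    have "I n = integral {a..b} (\<lambda>x. \<Sum>i<n. f i x)"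
      using I[of n] by (simp add: integral_unique)
    also have "\<dots> = (\<Sum>i<n. integral {a..b} (f i))"
      by (rule integral_sum) (auto intro: integrable_continuous_interval cont)
    finally show "I n = (\<Sum>i<n. integral {a..b} (f i))" .
  qed
  moreover have "J = integral {a..b} g"
    using J sums by (metis (no_types, lifting) integral_cong integral_unique sums_unique)
  ultimately show ?thesis
    using \<open>I \<longlonglongrightarrow> J\<close> unfolding sums_def by simp
qed

lemma has_integral_id_times_cos:
  fixes a m :: real
  assumes "0 \<le> a" "m \<noteq> 0"
  shows "((\<lambda>x. x * cos (m * x)) has_integral a * sin (m * a) / m + (cos (m * a) - 1) / m\<^sup>2) {0..a}"
proof -
  let ?F = "\<lambda>x. x * sin (m * x) / m + cos (m * x) / m\<^sup>2"
  have "((\<lambda>x. x * cos (m * x)) has_integral ?F a - ?F 0) {0..a}"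
  proof (rule fundamental_theorem_of_calculus)
    fix x assume "x \<in> {0..a}"
    show "(?F has_vector_derivative x * cos (m * x)) (at x within {0..a})"
      unfolding has_real_derivative_iff_has_vector_derivative[symmetric]
      using \<open>m \<noteq> 0\<close> by (auto intro!: derivative_eq_intros simp: field_simps power2_eq_square)
  qed (use \<open>0 \<le> a\<close> in simp)
  then show ?thesis by (simp add: diff_divide_distrib add_diff_eq)
qed

lemma has_integral_id_times_sin:
  fixes a m :: real
  assumes "0 \<le> a" "m \<noteq> 0"
  shows "((\<lambda>x. x * sin (m * x)) has_integral - (a * cos (m * a) / m) + sin (m * a) / m\<^sup>2) {0..a}"
proof -
  let ?F = "\<lambda>x. - (x * cos (m * x) / m) + sin (m * x) / m\<^sup>2"
  have "((\<lambda>x. x * sin (m * x)) has_integral ?F a - ?F 0) {0..a}"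
  proof (rule fundamental_theorem_of_calculus)
    fix x assume "x \<in> {0..a}"
    show "(?F has_vector_derivative x * sin (m * x)) (at x within {0..a})"
      unfolding has_real_derivative_iff_has_vector_derivative[symmetric]
      using \<open>m \<noteq> 0\<close> by (auto intro!: derivative_eq_intros simp: field_simps power2_eq_square)
  qed (use \<open>0 \<le> a\<close> in simp)
  then show ?thesis by simp
qed

lemma sums_integral_id_times_series:
  fixes r a :: real and w :: "nat \<Rightarrow> real \<Rightarrow> real"
  assumes "\<bar>r\<bar> < 1" "0 \<le> a"
    and "\<And>x. (\<lambda>n. r ^ Suc n * w n x) sums W x"
    and "\<And>n. continuous_on {0..a} (w n)"
    and "\<And>n x. \<bar>w n x\<bar> \<le> 1"
  shows "(\<lambda>n. integral {0..a} (\<lambda>x. x * (r ^ Suc n * w n x))) sums integral {0..a} (\<lambda>x. x * W x)"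
proof (rule sums_integral_termwise)
  show "(\<lambda>n. x * (r ^ Suc n * w n x)) sums (x * W x)" for x
    using assms(3) by (rule sums_mult)
  show "norm (x * (r ^ Suc n * w n x)) \<le> a * \<bar>r\<bar> ^ Suc n" if "x \<in> {0..a}" for n x
  proof -
    have "norm (x * (r ^ Suc n * w n x)) = \<bar>x\<bar> * (\<bar>r\<bar> ^ Suc n * \<bar>w n x\<bar>)"
      by (simp add: abs_mult power_abs)
    also have "\<dots> \<le> a * (\<bar>r\<bar> ^ Suc n * 1)"
      using that assms(5) by (intro mult_mono mult_left_mono) auto
    finally show ?thesis by simp
  qed
  show "summable (\<lambda>n. a * \<bar>r\<bar> ^ Suc n)"
    using assms(1) by (intro summable_mult summable_Suc_iff[THEN iffD2] summable_geometric) simp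
qed (intro continuous_intros assms(4))

lemma sums_integral_id_times_cos_series:
  fixes r a :: real
  assumes "\<bar>r\<bar> < 1" "0 \<le> a"
  shows "(\<lambda>n. r ^ Suc n * (a * sin (real (Suc n) * a) / real (Suc n)
              + (cos (real (Suc n) * a) - 1) / (real (Suc n))\<^sup>2))
           sums integral {0..a} (\<lambda>x. x * ((r * cos x - r\<^sup>2) / (1 - 2 * r * cos x + r\<^sup>2)))"
proof -
  have "integral {0..a} (\<lambda>x. x * (r ^ Suc n * cos (real (Suc n) * x)))
      = r ^ Suc n * (a * sin (real (Suc n) * a) / real (Suc n) + (cos (real (Suc n) * a) - 1) / (real (Suc n))\<^sup>2)" for n
    using has_integral_mult_right[OF has_integral_id_times_cos[OF assms(2), of "real (Suc n)"], of "r ^ Suc n"]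
    by (simp add: integral_unique mult.left_commute)
  moreover have "(\<lambda>n. integral {0..a} (\<lambda>x. x * (r ^ Suc n * cos (real (Suc n) * x))))
      sums integral {0..a} (\<lambda>x. x * ((r * cos x - r\<^sup>2) / (1 - 2 * r * cos x + r\<^sup>2)))"
    by (rule sums_integral_id_times_series[OF assms geometric_cos_sin_sums(1)[OF assms(1)]])
      (auto intro: continuous_intros)
  ultimately show ?thesis by simp
qed

lemma sums_integral_id_times_sin_series:
  fixes r a :: real
  assumes "\<bar>r\<bar> < 1" "0 \<le> a"
  shows "(\<lambda>n. r ^ Suc n * (- (a * cos (real (Suc n) * a) / real (Suc n))
              + sin (real (Suc n) * a) / (real (Suc n))\<^sup>2))
           sums integral {0..a} (\<lambda>x. x * (r * sin x / (1 - 2 * r * cos x + r\<^sup>2)))"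
proof -
  have "integral {0..a} (\<lambda>x. x * (r ^ Suc n * sin (real (Suc n) * x)))
      = r ^ Suc n * (- (a * cos (real (Suc n) * a) / real (Suc n)) + sin (real (Suc n) * a) / (real (Suc n))\<^sup>2)" for n
    using has_integral_mult_right[OF has_integral_id_times_sin[OF assms(2), of "real (Suc n)"], of "r ^ Suc n"]
    by (simp add: integral_unique mult.left_commute)
  moreover have "(\<lambda>n. integral {0..a} (\<lambda>x. x * (r ^ Suc n * sin (real (Suc n) * x))))
      sums integral {0..a} (\<lambda>x. x * (r * sin x / (1 - 2 * r * cos x + r\<^sup>2)))"
    by (rule sums_integral_id_times_series[OF assms geometric_cos_sin_sums(2)[OF assms(1)]])
      (auto intro: continuous_intros)
  ultimately show ?thesis by simp
qed

section \<open>Sampling at multiples of \<open>\<pi>/2\<close>\<close>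

lemma sin_cos_multiple_half_pi:
  fixes k :: nat
  shows "sin (real (Suc (2 * k)) * (pi / 2)) = (-1) ^ k"
    and "cos (real (Suc (2 * k)) * (pi / 2)) = 0"
    and "sin (real (Suc (Suc (2 * k))) * (pi / 2)) = 0"
    and "cos (real (Suc (Suc (2 * k))) * (pi / 2)) = (-1) ^ Suc k"
proof -
  have odd: "real (Suc (2 * k)) * (pi / 2) = real k * pi + pi / 2"
    by (simp add: algebra_simps)
  have even: "real (Suc (Suc (2 * k))) * (pi / 2) = real (Suc k) * pi"
    by (simp add: algebra_simps)
  show "sin (real (Suc (2 * k)) * (pi / 2)) = (-1) ^ k"
    and "cos (real (Suc (2 * k)) * (pi / 2)) = 0"
    unfolding odd by (simp_all add: sin_add cos_add)
  show "sin (real (Suc (Suc (2 * k))) * (pi / 2)) = 0"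
    and "cos (real (Suc (Suc (2 * k))) * (pi / 2)) = (-1) ^ Suc k"
    unfolding even by (simp_all only: sin_npi cos_npi)
qed

lemma sums_sin_multiple_half_pi:
  fixes c :: "nat \<Rightarrow> real"
  assumes "(\<lambda>k. (-1) ^ k * c (2 * k + 1)) sums s"
  shows "(\<lambda>n. sin (real (Suc n) * (pi / 2)) * c (Suc n)) sums s"
proof (rule sums_mono_reindex[THEN iffD1])
  show "strict_mono (\<lambda>k::nat. 2 * k)"
    by (rule strict_monoI) simp
  show "sin (real (Suc n) * (pi / 2)) * c (Suc n) = 0" if "n \<notin> range (\<lambda>k. 2 * k)" for n
  proof -
    from that obtain k where "n = Suc (2 * k)"
      by (metis oddE plus_1_eq_Suc add.commute rangeI dvdE)
    then show ?thesis using sin_cos_multiple_half_pi(3)[of k] by simp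
  qed
  have "sin (real (Suc (2 * k)) * (pi / 2)) * c (Suc (2 * k)) = (-1) ^ k * c (2 * k + 1)" for k
    using sin_cos_multiple_half_pi(1)[of k] by simp
  then show "(\<lambda>k. sin (real (Suc (2 * k)) * (pi / 2)) * c (Suc (2 * k))) sums s"
    using assms by (simp only:)
qed

lemma sums_cos_multiple_half_pi:
  fixes c :: "nat \<Rightarrow> real"
  assumes "(\<lambda>k. (-1) ^ Suc k * c (2 * k + 2)) sums s"
  shows "(\<lambda>n. cos (real (Suc n) * (pi / 2)) * c (Suc n)) sums s"
proof (rule sums_mono_reindex[THEN iffD1])
  show "strict_mono (\<lambda>k::nat. Suc (2 * k))"
    by (rule strict_monoI) simp
  show "cos (real (Suc n) * (pi / 2)) * c (Suc n) = 0" if "n \<notin> range (\<lambda>k. Suc (2 * k))" for n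
  proof -
    from that obtain k where "n = 2 * k"
      by (metis evenE oddE plus_1_eq_Suc add.commute rangeI)
    then show ?thesis using sin_cos_multiple_half_pi(2)[of k] by simp
  qed
  have "cos (real (Suc (Suc (2 * k))) * (pi / 2)) * c (Suc (Suc (2 * k))) = (-1) ^ Suc k * c (2 * k + 2)" for k
    using sin_cos_multiple_half_pi(4)[of k] by simp
  then show "(\<lambda>k. cos (real (Suc (Suc (2 * k))) * (pi / 2)) * c (Suc (Suc (2 * k)))) sums s"
    using assms by (simp only:)
qed

section \<open>Power series of \<open>arctan\<close>, \<open>ln\<close>, \<open>Li\<^sub>2\<close> and \<open>Ti\<^sub>2\<close>\<close>

lemma arctan_sums:
  fixes x :: real
  assumes "\<bar>x\<bar> \<le> 1"
  shows "(\<lambda>k. (-1) ^ k * (x ^ (2 * k + 1) / real (2 * k + 1))) sums arctan x"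
  using summable_arctan_series[OF assms] arctan_series[OF assms]
  by (simp add: sums_iff mult.commute)

lemma power_neg_square_Suc:
  fixes x :: "'a::comm_ring_1"
  shows "(- x\<^sup>2) ^ Suc k = (-1) ^ Suc k * x ^ (2 * k + 2)"
  unfolding power_minus[of "x\<^sup>2"] power_mult[symmetric] by simp

lemma ln_one_plus_square_sums:
  fixes x :: real
  assumes "\<bar>x\<bar> < 1"
  shows "(\<lambda>k. (-1) ^ Suc k * (x ^ (2 * k + 2) / real (2 * k + 2))) sums (- (ln (1 + x\<^sup>2) / 2))"
proof -
  have "\<bar>x\<^sup>2\<bar> < 1"
    using assms by (simp add: abs_square_less_1)
  then have "(\<lambda>n. - ((- x\<^sup>2) ^ n) / real n) sums ln (1 + x\<^sup>2)"
    by (rule ln_series')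
  then have "(\<lambda>k. - ((- x\<^sup>2) ^ Suc k) / real (Suc k)) sums ln (1 + x\<^sup>2)"
    by (subst sums_Suc_iff) simp
  then have "(\<lambda>k. - (1 / 2) * (- ((- x\<^sup>2) ^ Suc k) / real (Suc k))) sums (- (1 / 2) * ln (1 + x\<^sup>2))"
    by (rule sums_mult)
  moreover have "- (1 / 2) * (- ((- x\<^sup>2) ^ Suc k) / real (Suc k)) = (-1) ^ Suc k * (x ^ (2 * k + 2) / real (2 * k + 2))" for k
    by (simp add: power_neg_square_Suc field_simps del: power_Suc)
  ultimately show ?thesis by simp
qed

lemma Li2_term_bound:
  fixes x :: real
  assumes "\<bar>x\<bar> \<le> 1"
  shows "\<bar>x ^ Suc n / (real (Suc n))\<^sup>2\<bar> \<le> 1 / (real (Suc n))\<^sup>2"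
proof -
  have "\<bar>x\<bar> ^ Suc n \<le> 1"
    using assms by (intro power_le_one) auto
  then show ?thesis
    by (simp add: power_abs divide_right_mono del: power_Suc)
qed

lemma summable_inverse_Suc_squares: "summable (\<lambda>n. 1 / (real (Suc n))\<^sup>2)"
  using inverse_squares_sums by (simp add: sums_iff add.commute)

lemma Li2_sums:
  fixes x :: real
  assumes "\<bar>x\<bar> \<le> 1"
  shows "(\<lambda>n. x ^ Suc n / (real (Suc n))\<^sup>2) sums Li2 x"
proof -
  have "summable (\<lambda>n. x ^ Suc n / (real (Suc n))\<^sup>2)"
    using summable_inverse_Suc_squares by (rule summable_comparison_test') (use Li2_term_bound assms in simp)
  then show ?thesis unfolding Li2_def by (rule summable_sums)
qed

lemma Li2_neg_square_sums:
  fixes x :: real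
  assumes "\<bar>x\<bar> \<le> 1"
  shows "(\<lambda>k. (-1) ^ Suc k * (x ^ (2 * k + 2) / (real (2 * k + 2))\<^sup>2)) sums (Li2 (- x\<^sup>2) / 4)"
proof -
  have "\<bar>- x\<^sup>2\<bar> \<le> 1"
    using assms by (simp add: abs_square_le_1)
  from sums_divide[OF Li2_sums[OF this], of 4]
  have "(\<lambda>k. (- x\<^sup>2) ^ Suc k / (real (Suc k))\<^sup>2 / 4) sums (Li2 (- x\<^sup>2) / 4)" .
  moreover have "(- x\<^sup>2) ^ Suc k / (real (Suc k))\<^sup>2 / 4 = (-1) ^ Suc k * (x ^ (2 * k + 2) / (real (2 * k + 2))\<^sup>2)" for k
    unfolding power_neg_square_Suc by (simp add: field_simps power2_eq_square del: power_Suc)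
  ultimately show ?thesis by simp
qed

lemma Li2_zero: "Li2 0 = 0"
  by (simp add: Li2_def)

lemma Li2_one: "Li2 1 = pi\<^sup>2 / 6"
  using inverse_squares_sums by (simp add: Li2_def sums_iff add.commute)

lemma continuous_on_Li2: "continuous_on {-1..1} Li2"
proof -
  have "uniform_limit {-1..1} (\<lambda>n x. \<Sum>i<n. x ^ Suc i / (real (Suc i))\<^sup>2) Li2 sequentially"
    unfolding Li2_def[abs_def]
    by (rule Weierstrass_m_test[OF _ summable_inverse_Suc_squares]) (unfold real_norm_def, rule Li2_term_bound, auto)
  then show ?thesis
    by (rule uniform_limit_theorem[rotated]) (auto intro!: always_eventually continuous_intros)
qed

lemma has_real_derivative_Li2:
  fixes x :: real
  assumes "\<bar>x\<bar> < 1" "x \<noteq> 0"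
  shows "(Li2 has_real_derivative - ln (1 - x) / x) (at x)"
proof -
  define f where "f n = 1 / (real (Suc n))\<^sup>2" for n
  have Li2_eq: "Li2 = (\<lambda>x. \<Sum>n. f n * x ^ Suc n)"
    by (simp add: Li2_def f_def fun_eq_iff)
  have coeff: "f n * real (Suc n) = 1 / real (Suc n)" for n
    by (simp add: f_def power2_eq_square)
  have "summable (\<lambda>n. f n * real (Suc n) * y ^ n)" if "y \<in> {-1<..<1}" for y :: real
  proof (rule summable_comparison_test')
    show "summable (\<lambda>n. \<bar>y\<bar> ^ n)"
      using that by (intro summable_geometric) auto
    show "norm (f n * real (Suc n) * y ^ n) \<le> \<bar>y\<bar> ^ n" for n
    proof -
      have "\<bar>y\<bar> ^ n / real (Suc n) \<le> \<bar>y\<bar> ^ n / 1"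
        by (rule divide_left_mono) auto
      then show ?thesis
        unfolding coeff by (simp add: abs_mult power_abs)
    qed
  qed
  then have "(Li2 has_real_derivative (\<Sum>n. f n * real (Suc n) * x ^ n)) (at x)"
    unfolding Li2_eq using assms by (intro DERIV_power_series'[where R=1]) auto
  moreover have "(\<lambda>n. f n * real (Suc n) * x ^ n) sums (- ln (1 - x) / x)"
  proof -
    have "(\<lambda>n. - ((- (- x)) ^ n) / real n) sums ln (1 + - x)"
      using assms by (intro ln_series') auto
    then have "(\<lambda>n. - (x ^ Suc n) / real (Suc n)) sums ln (1 - x)"
      by (subst sums_Suc_iff) simp
    then have "(\<lambda>n. - (x ^ Suc n) / real (Suc n) / (- x)) sums (ln (1 - x) / (- x))"
      by (rule sums_divide)
    moreover have "- (x ^ Suc n) / real (Suc n) / (- x) = f n * real (Suc n) * x ^ n" for n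
      unfolding coeff using assms(2) by simp
    ultimately show ?thesis by simp
  qed
  ultimately show ?thesis by (simp add: sums_iff)
qed

lemma tendsto_Li2_reflection_at_right_0:
  "((\<lambda>y. Li2 y + Li2 (1 - y) + ln y * ln (1 - y)) \<longlongrightarrow> pi\<^sup>2 / 6) (at_right 0)"
proof -
  have near_0: "eventually (\<lambda>y. y \<in> {-1..1}) (at_right (0::real))"
    by (rule eventually_at_rightI[of 0 1]) auto
  have near_1: "eventually (\<lambda>y. 1 - y \<in> {-1..1}) (at_right (0::real))"
    by (rule eventually_at_rightI[of 0 1]) auto
  have "((\<lambda>y. Li2 y) \<longlongrightarrow> Li2 0) (at_right 0)"
    by (rule continuous_on_tendsto_compose[OF continuous_on_Li2 _ _ near_0]) auto
  moreover have "((\<lambda>y. Li2 (1 - y)) \<longlongrightarrow> Li2 1) (at_right 0)"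
    by (rule continuous_on_tendsto_compose[OF continuous_on_Li2 _ _ near_1])
      (auto intro!: tendsto_eq_intros)
  moreover have "((\<lambda>y::real. ln y * ln (1 - y)) \<longlongrightarrow> 0) (at_right 0)"
    by real_asymp
  ultimately have "((\<lambda>y. Li2 y + Li2 (1 - y) + ln y * ln (1 - y)) \<longlongrightarrow> Li2 0 + Li2 1 + 0) (at_right 0)"
    by (intro tendsto_add)
  then show ?thesis
    by (simp add: Li2_zero Li2_one)
qed

lemma Li2_reflection:
  fixes x :: real
  assumes "0 < x" "x < 1"
  shows "Li2 x + Li2 (1 - x) + ln x * ln (1 - x) = pi\<^sup>2 / 6"
proof -
  define F where "F y = Li2 y + Li2 (1 - y) + ln y * ln (1 - y)" for y :: real
  have "(F has_real_derivative 0) (at y within {0<..<1})" if "y \<in> {0<..<1}" for y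
  proof -
    from that have y: "0 < y" "y < 1" by auto
    have "(Li2 has_real_derivative - ln (1 - y) / y) (at y)"
      using y by (intro has_real_derivative_Li2) auto
    moreover have "((\<lambda>y. Li2 (1 - y)) has_real_derivative - ln y / (1 - y) * (- 1)) (at y)"
      using DERIV_chain2[OF has_real_derivative_Li2[of "1 - y"] DERIV_diff[OF DERIV_const DERIV_ident]] y
      by simp
    moreover have "((\<lambda>y. ln y * ln (1 - y)) has_real_derivative 1 / y * ln (1 - y) + ln y * (- 1 / (1 - y))) (at y)"
      using y by (auto intro!: derivative_eq_intros)
    ultimately have "(F has_real_derivative 0) (at y)"
      unfolding F_def[abs_def] by (rule DERIV_add[OF DERIV_add, THEN DERIV_cong]) simp
    then show ?thesis by (rule has_field_derivative_at_within)
  qed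
  then obtain c where c: "\<And>y. y \<in> {0<..<1} \<Longrightarrow> F y = c"
    using has_field_derivative_zero_constant[of "{0<..<1}" F] by auto
  have "(F \<longlongrightarrow> c) (at_right 0)"
    by (rule tendsto_eventually, rule eventually_at_rightI[of 0 1]) (auto simp: c)
  moreover have "(F \<longlongrightarrow> pi\<^sup>2 / 6) (at_right 0)"
    unfolding F_def[abs_def] by (rule tendsto_Li2_reflection_at_right_0)
  ultimately have "c = pi\<^sup>2 / 6"
    by (rule tendsto_unique[OF trivial_limit_at_right_real])
  then show ?thesis
    using c[of x] assms by (simp add: F_def)
qed

lemma Li2_half: "Li2 (1 / 2) = pi\<^sup>2 / 12 - (ln 2)\<^sup>2 / 2"
  using Li2_reflection[of "1 / 2"] by (simp add: ln_div power2_eq_square)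

lemma has_integral_power_from_0:
  fixes x :: real
  assumes "0 \<le> x"
  shows "((\<lambda>y. y ^ n) has_integral x ^ Suc n / real (Suc n)) {0..x}"
proof -
  have "((\<lambda>y. y ^ n) has_integral x ^ Suc n / real (Suc n) - 0 ^ Suc n / real (Suc n)) {0..x}"
  proof (rule fundamental_theorem_of_calculus)
    fix y
    have "((\<lambda>y. y ^ Suc n / real (Suc n)) has_real_derivative real (Suc n) * y ^ n / real (Suc n))
        (at y within {0..x})"
      using DERIV_pow[of "Suc n" y] by (intro DERIV_cdivide) simp
    then show "((\<lambda>y. y ^ Suc n / real (Suc n)) has_vector_derivative y ^ n) (at y within {0..x})"
      by (simp add: has_real_derivative_iff_has_vector_derivative[symmetric] del: of_nat_Suc)
  qed (rule assms)
  then show ?thesis by simp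
qed

lemma Ti2_sums:
  fixes x :: real
  assumes "0 \<le> x" "x < 1"
  shows "(\<lambda>k. (-1) ^ k * (x ^ (2 * k + 1) / (real (2 * k + 1))\<^sup>2)) sums Ti2 x"
proof -
  \<comment> \<open>\<open>arctan y / y\<close> is \<open>0\<close> at \<open>y = 0\<close> in HOL, but the power series equals \<open>1\<close> there;
      the single point does not change the integral.\<close>
  define g where "g y = (if y = 0 then 1 else arctan y / y)" for y :: real
  have "(\<lambda>k. integral {0..x} (\<lambda>y. (-1) ^ k / real (2 * k + 1) * y ^ (2 * k))) sums integral {0..x} g"
  proof (rule sums_integral_termwise[where M="\<lambda>k. x ^ (2 * k)"])
    show "(\<lambda>k. (-1) ^ k / real (2 * k + 1) * y ^ (2 * k)) sums g y" if "y \<in> {0..x}" for y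
    proof (cases "y = 0")
      case True
      have "(\<lambda>k. (-1) ^ k / real (2 * k + 1) * y ^ (2 * k)) = (\<lambda>k. if k = 0 then 1 else 0)"
        using True by (auto simp: fun_eq_iff)
      then show ?thesis
        using sums_single[of 0 "\<lambda>_. 1::real"] True by (simp add: g_def)
    next
      case False
      have "\<bar>y\<bar> \<le> 1"
        using that assms by auto
      from sums_divide[OF arctan_sums[OF this], of y]
      show ?thesis
        using False by (simp add: g_def power_add mult.commute)
    qed
    show "norm ((-1) ^ k / real (2 * k + 1) * y ^ (2 * k)) \<le> x ^ (2 * k)" if "y \<in> {0..x}" for k y
    proof -
      have "y ^ (2 * k) / real (2 * k + 1) \<le> y ^ (2 * k) / 1"
        using that by (intro divide_left_mono) auto
      then have "norm ((-1) ^ k / real (2 * k + 1) * y ^ (2 * k)) \<le> y ^ (2 * k)"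
        using that by (simp add: abs_mult)
      also have "\<dots> \<le> x ^ (2 * k)"
        using that by (intro power_mono) auto
      finally show ?thesis .
    qed
    show "summable (\<lambda>k. x ^ (2 * k))"
      using assms by (simp add: power_mult summable_geometric power_less_one_iff abs_square_less_1)
  qed (auto intro!: continuous_intros)
  moreover have "integral {0..x} (\<lambda>y. (-1) ^ k / real (2 * k + 1) * y ^ (2 * k))
      = (-1) ^ k * (x ^ (2 * k + 1) / (real (2 * k + 1))\<^sup>2)" for k
    using integral_unique[OF has_integral_power_from_0[OF assms(1), of "2 * k"]]
    by (simp add: power2_eq_square del: of_nat_Suc)
  moreover have "integral {0..x} g = Ti2 x"
    unfolding Ti2_def by (rule integral_spike[of "{0}"]) (auto simp: g_def)
  ultimately show ?thesis by simp
qed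

lemma integral_id_times_cos_ratio:
  "integral {0..pi/2} (\<lambda>\<phi>. \<phi> * (2 * cos \<phi> - 1) / (5 - 4 * cos \<phi>))
     = - (pi^2 / 12) + (ln 2)^2 / 2 + pi / 2 * arctan (1/2) + Li2 (-1/4) / 4"
proof -
  let ?r = "1 / 2 :: real"
  have "5 - 4 * cos x \<noteq> 0" for x :: real
    using cos_le_one[of x] by linarith
  then have kernel: "x * ((?r * cos x - ?r\<^sup>2) / (1 - 2 * ?r * cos x + ?r\<^sup>2)) = x * (2 * cos x - 1) / (5 - 4 * cos x)" for x
    by (simp add: field_simps power2_eq_square)
  have termwise: "(\<lambda>n. ?r ^ Suc n * (pi / 2 * sin (real (Suc n) * (pi / 2)) / real (Suc n)
          + (cos (real (Suc n) * (pi / 2)) - 1) / (real (Suc n))\<^sup>2))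
        sums integral {0..pi/2} (\<lambda>\<phi>. \<phi> * (2 * cos \<phi> - 1) / (5 - 4 * cos \<phi>))"
    (is "?termwise sums ?I")
    using sums_integral_id_times_cos_series[of ?r "pi / 2"] unfolding kernel by simp
  have split: "(\<lambda>n. pi / 2 * (sin (real (Suc n) * (pi / 2)) * (?r ^ Suc n / real (Suc n)))
          + cos (real (Suc n) * (pi / 2)) * (?r ^ Suc n / (real (Suc n))\<^sup>2)
          - ?r ^ Suc n / (real (Suc n))\<^sup>2)
        sums (pi / 2 * arctan ?r + Li2 (- ?r\<^sup>2) / 4 - Li2 ?r)" (is "?split sums _")
  proof (intro sums_diff sums_add sums_mult)
    show "(\<lambda>n. sin (real (Suc n) * (pi / 2)) * (?r ^ Suc n / real (Suc n))) sums arctan ?r"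
      by (rule sums_sin_multiple_half_pi[where c="\<lambda>m. ?r ^ m / real m", OF arctan_sums]) simp
    show "(\<lambda>n. cos (real (Suc n) * (pi / 2)) * (?r ^ Suc n / (real (Suc n))\<^sup>2)) sums (Li2 (- ?r\<^sup>2) / 4)"
      by (rule sums_cos_multiple_half_pi[where c="\<lambda>m. ?r ^ m / (real m)\<^sup>2", OF Li2_neg_square_sums]) simp
    show "(\<lambda>n. ?r ^ Suc n / (real (Suc n))\<^sup>2) sums Li2 ?r"
      by (rule Li2_sums) simp
  qed
  have "?termwise = ?split"
    by (simp add: fun_eq_iff diff_divide_distrib algebra_simps)
  then have "?I = pi / 2 * arctan ?r + Li2 (- ?r\<^sup>2) / 4 - Li2 ?r"
    using sums_unique2 termwise split by simp
  then show ?thesis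
    by (simp add: Li2_half power2_eq_square)
qed

lemma integral_id_times_sin_ratio:
  "integral {0..pi/2} (\<lambda>\<phi>. 2 * \<phi> * sin \<phi> / (5 - 4 * cos \<phi>)) = pi / 4 * ln (5/4) + Ti2 (1/2)"
proof -
  let ?r = "1 / 2 :: real"
  have "5 - 4 * cos x \<noteq> 0" for x :: real
    using cos_le_one[of x] by linarith
  then have kernel: "x * (?r * sin x / (1 - 2 * ?r * cos x + ?r\<^sup>2)) = 2 * x * sin x / (5 - 4 * cos x)" for x
    by (simp add: field_simps power2_eq_square)
  have termwise: "(\<lambda>n. ?r ^ Suc n * (- (pi / 2 * cos (real (Suc n) * (pi / 2)) / real (Suc n))
          + sin (real (Suc n) * (pi / 2)) / (real (Suc n))\<^sup>2))
        sums integral {0..pi/2} (\<lambda>\<phi>. 2 * \<phi> * sin \<phi> / (5 - 4 * cos \<phi>))"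
    (is "?termwise sums ?I")
    using sums_integral_id_times_sin_series[of ?r "pi / 2"] unfolding kernel by simp
  have split: "(\<lambda>n. - (pi / 2) * (cos (real (Suc n) * (pi / 2)) * (?r ^ Suc n / real (Suc n)))
          + sin (real (Suc n) * (pi / 2)) * (?r ^ Suc n / (real (Suc n))\<^sup>2))
        sums (- (pi / 2) * (- (ln (1 + ?r\<^sup>2) / 2)) + Ti2 ?r)" (is "?split sums _")
  proof (intro sums_add sums_mult)
    show "(\<lambda>n. cos (real (Suc n) * (pi / 2)) * (?r ^ Suc n / real (Suc n))) sums (- (ln (1 + ?r\<^sup>2) / 2))"
      by (rule sums_cos_multiple_half_pi[where c="\<lambda>m. ?r ^ m / real m", OF ln_one_plus_square_sums]) simp
    show "(\<lambda>n. sin (real (Suc n) * (pi / 2)) * (?r ^ Suc n / (real (Suc n))\<^sup>2)) sums Ti2 ?r"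
      by (rule sums_sin_multiple_half_pi[where c="\<lambda>m. ?r ^ m / (real m)\<^sup>2", OF Ti2_sums]) simp_all
  qed
  have "?termwise = ?split"
    by (simp add: fun_eq_iff algebra_simps)
  then have "?I = - (pi / 2) * (- (ln (1 + ?r\<^sup>2) / 2)) + Ti2 ?r"
    using sums_unique2 termwise split by simp
  then show ?thesis
    by (simp add: power2_eq_square)
qed

theorem proposition1:
  shows "(integral {0..pi/2} (\<lambda>\<phi>. \<phi> * (2 * cos \<phi> - 1) / (5 - 4 * cos \<phi>))
           = - (pi^2 / 12) + (ln 2)^2 / 2 + pi / 2 * arctan (1/2) + Li2 (-1/4) / 4)
         \<and> (integral {0..pi/2} (\<lambda>\<phi>. 2 * \<phi> * sin \<phi> / (5 - 4 * cos \<phi>))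
           = pi / 4 * ln (5/4) + Ti2 (1/2))"
  using integral_id_times_cos_ratio integral_id_times_sin_ratio ..

end
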